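(* For finite lists $\vec p,\vec q$ of positions write $\vec p \ge \vec q$ (equivalently $\vec q\le\vec p$) if $\vec q$ is a subsequence of $\vec p$. Extend this to atomic clocked Böhm trees: $T_1\le T_2$ if $T_1,T_2$ coincide after erasing annotations and at every position either neither subtree has a root annotation or both do with annotations $\vec a_1\le\vec a_2$; $T_1\le_{\mathrm{ev}}T_2$ (resp. $T_1=_{\mathrm{ev}}T_2$) if they coincide after erasing annotations and there is $\ell$ such that this condition with $\le$ (resp. with equality) holds at all positions of length $\ge\ell$. Then for all $\lambda$-terms $M,N$: (a) if $M\twoheadrightarrow_\beta N$ then $\mathrm{BT}^a(M)\ge\mathrm{BT}^a(N)$; (b) if there is no $M'$ with $M\twoheadrightarrow_\beta M'$ and $\mathrm{BT}^a(M')\le\mathrm{BT}^a(N)$, then $M\neq_\beta N$; (c) if $M$ is simple and $M\twoheadrightarrow_\beta N$, then $\mathrm{BT}^a(M)=_{\mathrm{ev}}\mathrm{BT}^a(N)$; (d) if $M$ is simple and not $\mathrm{BT}^a(M)\le_{\mathrm{ev}}\mathrm{BT}^a(N)$, then $M\neq_\beta N$; (e) if $M$ and $N$ are simple and not $\mathrm{BT}^a(M)=_{\mathrm{ev}}\mathrm{BT}^a(N)$, then $M\neq_\beta N$.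
   Context: Untyped $\lambda$-calculus modulo $\alpha$. Positions are sequences over $\{0,1,2\}$ ($0$ abstraction body, $1$ function part, $2$ argument of an application). A head reduction step is a $\beta$-step $\lambda x_1\ldots x_n.(\lambda y.P)QQ_1\ldots Q_m \to \lambda x_1\ldots x_n.P[y:=Q]Q_1\ldots Q_m$; its position is the position of the contracted redex. A hnf is a term $\lambda x_1\ldots x_n.\,yQ_1\ldots Q_m$. The atomic clocked Böhm tree $\mathrm{BT}^a(M)$ is defined coinductively: $\bot$ if $M$ has no hnf; otherwise, if the head reduction of $M$ to hnf consists of steps at positions $p_1,\dots,p_k$ (in order) and ends in $\lambda x_1\ldots x_n.\,yM_1\ldots M_m$, then $\mathrm{BT}^a(M)$ is the tree $\lambda x_1\ldots x_n.\,y\,\mathrm{BT}^a(M_1)\ldots\mathrm{BT}^a(M_m)$ whose root node is annotated with the list $\langle p_1,\dots,p_k\rangle$. A redex $(\lambda x.P)Q$ is simple if $x$ occurs at most once in $P$ or $Q$ is a $\beta$-normal form. The simple terms form the largest set $X$ such that each $M\in X$ either has no hnf, or its head reduction to hnf $\lambda x_1\ldots x_n.\,yM_1\ldots M_m$ contracts only simple redexes and $M_1,\dots,M_m\in X$. *)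

theory Defs
  imports Main "HOL-Library.Sublist"
begin

datatype dB = Var nat | App dB dB | Abs dB

type_synonym pos = "nat list"  (* 0: abstraction body, 1: function part, 2: argument *)

primrec lift :: "dB \<Rightarrow> nat \<Rightarrow> dB" where
  "lift (Var i) k = (if i < k then Var i else Var (Suc i))"
| "lift (App s t) k = App (lift s k) (lift t k)"
| "lift (Abs s) k = Abs (lift s (Suc k))"

primrec subst :: "dB \<Rightarrow> dB \<Rightarrow> nat \<Rightarrow> dB" where
  "subst (Var i) s k = (if k < i then Var (i - 1) else if i = k then s else Var i)"
| "subst (App t u) s k = App (subst t s k) (subst u s k)"
| "subst (Abs t) s k = Abs (subst t (lift s 0) (Suc k))"

inductive beta :: "dB \<Rightarrow> dB \<Rightarrow> bool" where
  beta_redex: "beta (App (Abs s) t) (subst s t 0)"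
| beta_appL: "beta s t \<Longrightarrow> beta (App s u) (App t u)"
| beta_appR: "beta s t \<Longrightarrow> beta (App u s) (App u t)"
| beta_abs: "beta s t \<Longrightarrow> beta (Abs s) (Abs t)"

abbreviation beta_reds :: "dB \<Rightarrow> dB \<Rightarrow> bool" where
  "beta_reds \<equiv> beta\<^sup>*\<^sup>*"

abbreviation beta_conv :: "dB \<Rightarrow> dB \<Rightarrow> bool" where
  "beta_conv \<equiv> equivclp beta"

definition beta_nf :: "dB \<Rightarrow> bool" where
  "beta_nf M \<longleftrightarrow> \<not> (\<exists>N. beta M N)"

inductive hstep :: "dB \<Rightarrow> pos \<Rightarrow> dB \<Rightarrow> bool" where
  hstep_redex: "hstep (App (Abs P) Q) [] (subst P Q 0)"
| hstep_app: "hstep M p M' \<Longrightarrow> M = App A B \<Longrightarrow> hstep (App M Q) (1 # p) (App M' Q)"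
| hstep_abs: "hstep M p M' \<Longrightarrow> hstep (Abs M) (0 # p) (Abs M')"

inductive hred :: "dB \<Rightarrow> (pos \<times> dB) list \<Rightarrow> dB \<Rightarrow> bool" where
  hred_refl: "hred M [] M"
| hred_step: "hstep M p M' \<Longrightarrow> hred M' s N \<Longrightarrow> hred M ((p, M) # s) N"

fun strip_abs :: "dB \<Rightarrow> nat \<times> dB" where
  "strip_abs (Abs M) = (case strip_abs M of (n, B) \<Rightarrow> (Suc n, B))"
| "strip_abs M = (0, M)"

fun strip_app :: "dB \<Rightarrow> dB \<times> dB list" where
  "strip_app (App M N) = (case strip_app M of (h, as) \<Rightarrow> (h, as @ [N]))"
| "strip_app M = (M, [])"

text \<open>hnf: \<open>\<lambda>x1..xn. y Q1 .. Qm\<close>\<close>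
definition is_hnf :: "dB \<Rightarrow> bool" where
  "is_hnf M \<longleftrightarrow> (\<exists>y. fst (strip_app (snd (strip_abs M))) = Var y)"

definition hnf_nabs :: "dB \<Rightarrow> nat" where
  "hnf_nabs M = fst (strip_abs M)"

definition hnf_head :: "dB \<Rightarrow> nat" where
  "hnf_head M = (case fst (strip_app (snd (strip_abs M))) of Var y \<Rightarrow> y | _ \<Rightarrow> 0)"

definition hnf_args :: "dB \<Rightarrow> dB list" where
  "hnf_args M = snd (strip_app (snd (strip_abs M)))"

definition has_hnf :: "dB \<Rightarrow> bool" where
  "has_hnf M \<longleftrightarrow> (\<exists>N. beta_conv M N \<and> is_hnf N)"

definition hnf_red :: "dB \<Rightarrow> (pos \<times> dB) list \<times> dB" where
  "hnf_red M = (THE (s, N). hred M s N \<and> is_hnf N)"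

text \<open>Node a n y ts represents \<open>\<lambda>x1..xn. y t1 .. tm\<close> with root annotation a;
  y is a de Bruijn index.\<close>
codatatype 'a bt = Bot | Node 'a nat nat "'a bt list"

primcorec BTa :: "dB \<Rightarrow> pos list bt" where
  "BTa M = (if has_hnf M
     then Node (map fst (fst (hnf_red M))) (hnf_nabs (snd (hnf_red M)))
               (hnf_head (snd (hnf_red M))) (map BTa (hnf_args (snd (hnf_red M))))
     else Bot)"

text \<open>Term position of the i-th (0-based) argument of a node with n abstractions and m arguments.\<close>
definition cpos :: "nat \<Rightarrow> nat \<Rightarrow> nat \<Rightarrow> pos" where
  "cpos n m i = replicate n 0 @ replicate (m - Suc i) 1 @ [2]"

inductive ann_at :: "'a bt \<Rightarrow> pos \<Rightarrow> 'a \<Rightarrow> bool" where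
  ann_root: "ann_at (Node a n y ts) [] a"
| ann_child: "i < length ts \<Longrightarrow> ann_at (ts ! i) q b \<Longrightarrow>
     ann_at (Node a n y ts) (cpos n (length ts) i @ q) b"

definition erase :: "'a bt \<Rightarrow> unit bt" where
  "erase T = map_bt (\<lambda>_. ()) T"

definition ann_cond :: "(pos list \<Rightarrow> pos list \<Rightarrow> bool) \<Rightarrow> pos list bt \<Rightarrow> pos list bt \<Rightarrow> pos \<Rightarrow> bool" where
  "ann_cond R T1 T2 p \<longleftrightarrow>
     ((\<nexists>a. ann_at T1 p a) \<and> (\<nexists>a. ann_at T2 p a)) \<or>
     (\<exists>a1 a2. ann_at T1 p a1 \<and> ann_at T2 p a2 \<and> R a1 a2)"

definition bt_le :: "pos list bt \<Rightarrow> pos list bt \<Rightarrow> bool" where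
  "bt_le T1 T2 \<longleftrightarrow> erase T1 = erase T2 \<and> (\<forall>p. ann_cond subseq T1 T2 p)"

definition bt_le_ev :: "pos list bt \<Rightarrow> pos list bt \<Rightarrow> bool" where
  "bt_le_ev T1 T2 \<longleftrightarrow> erase T1 = erase T2 \<and>
     (\<exists>l. \<forall>p. length p \<ge> l \<longrightarrow> ann_cond subseq T1 T2 p)"

definition bt_eq_ev :: "pos list bt \<Rightarrow> pos list bt \<Rightarrow> bool" where
  "bt_eq_ev T1 T2 \<longleftrightarrow> erase T1 = erase T2 \<and>
     (\<exists>l. \<forall>p. length p \<ge> l \<longrightarrow> ann_cond (=) T1 T2 p)"

fun subterm_at :: "dB \<Rightarrow> pos \<Rightarrow> dB option" where
  "subterm_at M [] = Some M"
| "subterm_at (Abs M) (0 # p) = subterm_at M p"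
| "subterm_at (App M N) (Suc 0 # p) = subterm_at M p"
| "subterm_at (App M N) (Suc (Suc 0) # p) = subterm_at N p"
| "subterm_at _ _ = None"

primrec occ :: "nat \<Rightarrow> dB \<Rightarrow> nat" where
  "occ k (Var i) = (if i = k then 1 else 0)"
| "occ k (App s t) = occ k s + occ k t"
| "occ k (Abs s) = occ (Suc k) s"

definition simple_redex :: "dB \<Rightarrow> bool" where
  "simple_redex R \<longleftrightarrow> (\<exists>P Q. R = App (Abs P) Q \<and> (occ 0 P \<le> 1 \<or> beta_nf Q))"

coinductive simple :: "dB \<Rightarrow> bool" where
  simple_nohnf: "\<not> has_hnf M \<Longrightarrow> simple M"
| simple_hnf: "hred M s N \<Longrightarrow> is_hnf N \<Longrightarrow>
     (\<forall>(p, K) \<in> set s. \<exists>R. subterm_at K p = Some R \<and> simple_redex R) \<Longrightarrow>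
     (\<forall>A \<in> set (hnf_args N). simple A) \<Longrightarrow> simple M"

end

theory Submission
  imports Defs "HOL-Library.Confluence"
begin

text \<open>Head reduction is deterministic, and a \<open>\<beta>\<close>-step of a term either contracts its head redex or
  leaves a residual of it at the same position. Following the head reduction of \<open>M\<close> along a
  reduction \<open>M \<twoheadrightarrow> N\<close> therefore turns it into the head reduction of \<open>N\<close> with some steps deleted,
  and the two head normal forms have the same shape with reducing arguments: recursing into the
  arguments gives (a), and (b) follows by Church--Rosser. If the contracted redexes are simple,
  pushing a reduction of \<open>k\<close> steps through such a contraction yields a reduction of at most \<open>k\<close>
  steps, and every head step that disappears consumes one of them. So a reduction of length \<open>k\<close>
  starting from a simple term changes the annotation at no more than \<open>k\<close> positions; this
  gives (c), and (d), (e) via a common reduct.\<close>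

section \<open>Substitution and compatibility of reduction\<close>

abbreviation apps :: "dB \<Rightarrow> dB list \<Rightarrow> dB" where
  "apps M Ns \<equiv> foldl App M Ns"

primrec absn :: "nat \<Rightarrow> dB \<Rightarrow> dB" where
  "absn 0 M = M"
| "absn (Suc n) M = Abs (absn n M)"

lemma lift_lift: "i \<le> k \<Longrightarrow> lift (lift t i) (Suc k) = lift (lift t k) i"
  by (induct t arbitrary: i k) auto

lemma lift_subst: "j \<le> i \<Longrightarrow> lift (subst t s j) i = subst (lift t (Suc i)) (lift s i) j"
  by (induct t arbitrary: i j s) (auto simp: lift_lift)

lemma lift_subst_lt: "i \<le> j \<Longrightarrow> lift (subst t s j) i = subst (lift t i) (lift s i) (Suc j)"
  by (induct t arbitrary: i j s) (auto simp: lift_lift)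

lemma subst_lift [simp]: "subst (lift t k) s k = t"
  by (induct t arbitrary: k s) auto

lemma subst_subst:
  "i \<le> j \<Longrightarrow> subst (subst t (lift v i) (Suc j)) (subst u v j) i = subst (subst t u i) v j"
  by (induct t arbitrary: i j u v) (auto simp: lift_lift[symmetric] lift_subst_lt)

lemma lift_apps [simp]: "lift (apps M Ns) k = apps (lift M k) (map (\<lambda>N. lift N k) Ns)"
  by (induct Ns arbitrary: M) auto

lemma subst_apps [simp]: "subst (apps M Ns) N k = apps (subst M N k) (map (\<lambda>L. subst L N k) Ns)"
  by (induct Ns arbitrary: M) auto

lemma lift_beta: "beta M M' \<Longrightarrow> beta (lift M k) (lift M' k)"
proof (induct M M' arbitrary: k rule: beta.induct)
  case (beta_redex s t)
  then show ?case using beta.beta_redex[of "lift s (Suc k)" "lift t k"] by (simp add: lift_subst)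
qed (auto intro: beta.intros)

lemma subst_beta: "beta M M' \<Longrightarrow> beta (subst M N k) (subst M' N k)"
proof (induct M M' arbitrary: N k rule: beta.induct)
  case (beta_redex s t)
  then show ?case
    using beta.beta_redex[of "subst s (lift N 0) (Suc k)" "subst t N k"] by (simp add: subst_subst)
qed (auto intro: beta.intros)

lemma beta_reds_Abs: "beta_reds M M' \<Longrightarrow> beta_reds (Abs M) (Abs M')"
  by (induct rule: rtranclp_induct) (auto intro: rtranclp.rtrancl_into_rtrancl beta_abs)

lemma beta_reds_App:
  assumes "beta_reds M M'" and "beta_reds N N'"
  shows "beta_reds (App M N) (App M' N')"
proof -
  have "beta_reds (App M N) (App M' N)"
    using assms(1) by (induct rule: rtranclp_induct) (auto intro: rtranclp.rtrancl_into_rtrancl beta_appL)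
  also have "beta_reds (App M' N) (App M' N')"
    using assms(2) by (induct rule: rtranclp_induct) (auto intro: rtranclp.rtrancl_into_rtrancl beta_appR)
  finally show ?thesis .
qed

lemma absn_beta: "beta M M' \<Longrightarrow> beta (absn n M) (absn n M')"
  by (induct n) (auto intro: beta_abs)

lemma subst_reds_arg: "beta N N' \<Longrightarrow> beta_reds (subst M N k) (subst M N' k)"
proof (induct M arbitrary: N N' k)
  case (Abs M)
  then show ?case by (simp add: beta_reds_Abs lift_beta)
qed (auto intro: beta_reds_App)

lemma subst_reds:
  assumes "beta_reds M M'" and "beta_reds N N'"
  shows "beta_reds (subst M N k) (subst M' N' k)"
proof -
  have "beta_reds (subst M N k) (subst M' N k)"
    using assms(1) by (induct rule: rtranclp_induct) (auto intro: rtranclp.rtrancl_into_rtrancl subst_beta)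
  also have "beta_reds (subst M' N k) (subst M' N' k)"
    using assms(2) by (induct rule: rtranclp_induct) (auto intro: rtranclp_trans subst_reds_arg)
  finally show ?thesis .
qed

section \<open>Confluence\<close>

inductive par_beta :: "dB \<Rightarrow> dB \<Rightarrow> bool" where
  par_Var: "par_beta (Var i) (Var i)"
| par_Abs: "par_beta M M' \<Longrightarrow> par_beta (Abs M) (Abs M')"
| par_App: "par_beta M M' \<Longrightarrow> par_beta N N' \<Longrightarrow> par_beta (App M N) (App M' N')"
| par_redex: "par_beta M M' \<Longrightarrow> par_beta N N' \<Longrightarrow> par_beta (App (Abs M) N) (subst M' N' 0)"

lemma par_beta_refl: "par_beta M M"
  by (induct M) (auto intro: par_beta.intros)

lemma beta_imp_par_beta: "beta M N \<Longrightarrow> par_beta M N"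
  by (induct rule: beta.induct) (auto intro: par_beta.intros par_beta_refl)

lemma par_beta_imp_reds: "par_beta M N \<Longrightarrow> beta_reds M N"
  by (induct rule: par_beta.induct)
    (auto intro: beta_reds_Abs beta_reds_App subst_reds rtranclp_trans beta_redex)

lemma par_beta_lift: "par_beta M M' \<Longrightarrow> par_beta (lift M k) (lift M' k)"
proof (induct arbitrary: k rule: par_beta.induct)
  case (par_redex M M' N N')
  then show ?case using par_beta.par_redex[of "lift M (Suc k)" "lift M' (Suc k)"] by (simp add: lift_subst)
qed (auto intro: par_beta.intros)

lemma par_beta_subst:
  "par_beta M M' \<Longrightarrow> par_beta N N' \<Longrightarrow> par_beta (subst M N k) (subst M' N' k)"
proof (induct arbitrary: N N' k rule: par_beta.induct)
  case (par_redex M M' P P')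
  have "par_beta (subst M (lift N 0) (Suc k)) (subst M' (lift N' 0) (Suc k))"
    by (simp add: par_redex par_beta_lift)
  moreover have "par_beta (subst P N k) (subst P' N' k)"
    by (simp add: par_redex)
  ultimately show ?case
    using par_beta.par_redex subst_subst[of 0 k M' N' P'] by fastforce
qed (simp_all add: par_beta.intros par_beta_lift)

fun complete_dev :: "dB \<Rightarrow> dB" where
  "complete_dev (Var i) = Var i"
| "complete_dev (Abs M) = Abs (complete_dev M)"
| "complete_dev (App (Abs M) N) = subst (complete_dev M) (complete_dev N) 0"
| "complete_dev (App M N) = App (complete_dev M) (complete_dev N)"

lemma par_beta_cdev: "par_beta M N \<Longrightarrow> par_beta N (complete_dev M)"
proof (induct rule: par_beta.induct)
  case (par_App M M' N N')
  then show ?case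
    by (cases M) (auto elim: par_beta.cases intro: par_beta.intros par_beta_subst)
qed (auto intro: par_beta.intros par_beta_subst)

lemma reds_eq_par_reds: "beta_reds = par_beta\<^sup>*\<^sup>*"
proof (intro antisym)
  show "beta_reds \<le> par_beta\<^sup>*\<^sup>*"
    by (rule rtranclp_mono) (simp add: beta_imp_par_beta predicate2I)
  have "par_beta\<^sup>*\<^sup>* \<le> beta_reds\<^sup>*\<^sup>*"
    by (rule rtranclp_mono) (simp add: par_beta_imp_reds predicate2I)
  then show "par_beta\<^sup>*\<^sup>* \<le> beta_reds" by simp
qed

lemma confluentp_beta: "confluentp beta"
proof -
  have "strong_confluentp par_beta"
    by (rule strong_confluentpI) (blast intro: par_beta_cdev)
  then have "confluentp par_beta" by (rule strong_confluentp_imp_confluentp)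
  then show ?thesis by (simp add: confluentp_conv_strong_confluentp_rtranclp reds_eq_par_reds)
qed

lemma church_rosser: "beta_conv M N \<Longrightarrow> \<exists>L. beta_reds M L \<and> beta_reds N L"
  using semiconfluentp_equivclp[OF confluentp_imp_semiconfluentp[OF confluentp_beta]]
  by (auto simp: rtranclp_conversep)

section \<open>Head normal forms and head reduction\<close>

lemma apps_eq_Abs_iff [simp]: "apps M Ns = Abs P \<longleftrightarrow> M = Abs P \<and> Ns = []"
  by (induct Ns rule: rev_induct) auto

lemma strip_abs_absn: "(\<And>P. X \<noteq> Abs P) \<Longrightarrow> strip_abs (absn n X) = (n, X)"
  by (induct n) (cases X; auto)+

lemma strip_app_apps: "(\<And>A B. X \<noteq> App A B) \<Longrightarrow> strip_app (apps X Ns) = (X, Ns)"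
  by (induct Ns rule: rev_induct) (cases X; auto)+

lemma absn_strip_abs: "absn (fst (strip_abs M)) (snd (strip_abs M)) = M"
  by (induct M rule: strip_abs.induct) (auto split: prod.splits)

lemma apps_strip_app: "apps (fst (strip_app M)) (snd (strip_app M)) = M"
  by (induct M rule: strip_app.induct) (auto split: prod.splits)

lemma absn_apps_inj:
  assumes "absn n (apps h Ns) = absn n' (apps h' Ns')"
    and "\<And>A B. h \<noteq> App A B" "\<And>A B. h' \<noteq> App A B"
    and "(\<forall>P. h \<noteq> Abs P) \<or> Ns \<noteq> []" "(\<forall>P. h' \<noteq> Abs P) \<or> Ns' \<noteq> []"
  shows "n = n' \<and> h = h' \<and> Ns = Ns'"
proof -
  have "strip_abs (absn n (apps h Ns)) = (n, apps h Ns)"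
    by (rule strip_abs_absn) (use assms(4) in auto)
  moreover have "strip_abs (absn n' (apps h' Ns')) = (n', apps h' Ns')"
    by (rule strip_abs_absn) (use assms(5) in auto)
  ultimately have "n = n'" and apps_eq: "apps h Ns = apps h' Ns'"
    using assms(1) by (metis prod.inject)+
  moreover have "strip_app (apps h Ns) = (h, Ns)"
    using assms(2) by (simp add: strip_app_apps)
  moreover have "strip_app (apps h' Ns') = (h', Ns')"
    using assms(3) by (simp add: strip_app_apps)
  ultimately show ?thesis by (metis prod.inject)
qed

lemma is_hnf_iff: "is_hnf M \<longleftrightarrow> (\<exists>n y As. M = absn n (apps (Var y) As))"
proof
  assume "is_hnf M"
  then obtain y where y: "fst (strip_app (snd (strip_abs M))) = Var y" by (auto simp: is_hnf_def)
  have "M = absn (fst (strip_abs M))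
      (apps (fst (strip_app (snd (strip_abs M)))) (snd (strip_app (snd (strip_abs M)))))"
    by (simp only: apps_strip_app absn_strip_abs)
  then show "\<exists>n y As. M = absn n (apps (Var y) As)"
    unfolding y by blast
qed (auto simp: is_hnf_def strip_abs_absn strip_app_apps)

lemma hnf_selectors [simp]:
  "hnf_nabs (absn n (apps (Var y) As)) = n"
  "hnf_head (absn n (apps (Var y) As)) = y"
  "hnf_args (absn n (apps (Var y) As)) = As"
  by (simp_all add: hnf_nabs_def hnf_head_def hnf_args_def strip_abs_absn strip_app_apps)

lemma hstep_apps: "hstep (apps (App (Abs P) Q) Rs) (replicate (length Rs) 1) (apps (subst P Q 0) Rs)"
proof (induct Rs rule: rev_induct)
  case (snoc R Rs)
  obtain A B where "apps (App (Abs P) Q) Rs = App A B"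
    by (induct Rs rule: rev_induct) auto
  from hstep_app[OF snoc this]
  show ?case by (simp add: replicate_append_same)
qed (simp add: hstep_redex)

lemma hstep_iff:
  "hstep M p M' \<longleftrightarrow> (\<exists>n P Q Rs. M = absn n (apps (App (Abs P) Q) Rs) \<and>
     M' = absn n (apps (subst P Q 0) Rs) \<and> p = replicate n 0 @ replicate (length Rs) 1)"
proof
  show "hstep M p M' \<Longrightarrow> \<exists>n P Q Rs. M = absn n (apps (App (Abs P) Q) Rs) \<and>
     M' = absn n (apps (subst P Q 0) Rs) \<and> p = replicate n 0 @ replicate (length Rs) 1"
  proof (induct rule: hstep.induct)
    case (hstep_redex P Q)
    show ?case by (intro exI[of _ 0] exI[of _ P] exI[of _ Q] exI[of _ "[]"]) simp
  next
    case (hstep_app M p M' A B Q)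
    then obtain n P Q' Rs where "M = absn n (apps (App (Abs P) Q') Rs)"
      "M' = absn n (apps (subst P Q' 0) Rs)" "p = replicate n 0 @ replicate (length Rs) 1"
      by blast
    moreover from hstep_app.hyps(3) this(1) have "n = 0" by (cases n) auto
    ultimately show ?case by (intro exI[of _ 0] exI[of _ P] exI[of _ Q'] exI[of _ "Rs @ [Q]"]) simp
  next
    case (hstep_abs M p M')
    then obtain n P Q Rs where "M = absn n (apps (App (Abs P) Q) Rs)"
      "M' = absn n (apps (subst P Q 0) Rs)" "p = replicate n 0 @ replicate (length Rs) 1"
      by blast
    then show ?case by (intro exI[of _ "Suc n"] exI[of _ P] exI[of _ Q] exI[of _ Rs]) simp
  qed
next
  assume "\<exists>n P Q Rs. M = absn n (apps (App (Abs P) Q) Rs) \<and>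
     M' = absn n (apps (subst P Q 0) Rs) \<and> p = replicate n 0 @ replicate (length Rs) 1"
  then obtain n P Q Rs where "M = absn n (apps (App (Abs P) Q) Rs)"
     "M' = absn n (apps (subst P Q 0) Rs)" "p = replicate n 0 @ replicate (length Rs) 1" by blast
  then show "hstep M p M'"
  proof (induct n arbitrary: M M' p)
    case 0
    then show ?case using hstep_apps[of P Q Rs] by simp
  next
    case (Suc n)
    then show ?case using hstep_abs[of "absn n _"] by simp
  qed
qed

lemma absn_redex_inj:
  "absn n (apps (App (Abs P) Q) Rs) = absn n' (apps (App (Abs P') Q') Rs') \<Longrightarrow>
    n = n' \<and> P = P' \<and> Q = Q' \<and> Rs = Rs'"
  using absn_apps_inj[of n "Abs P" "Q # Rs" n' "Abs P'" "Q' # Rs'"] by auto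

lemma absn_hnf_neq_redex: "absn n (apps (Var y) As) \<noteq> absn n' (apps (App (Abs P) Q) Rs)"
  using absn_apps_inj[of n "Var y" As n' "Abs P" "Q # Rs"] by auto

lemma hstep_det: "hstep M p M1 \<Longrightarrow> hstep M q M2 \<Longrightarrow> p = q \<and> M1 = M2"
  unfolding hstep_iff by (metis absn_redex_inj)

lemma hnf_no_hstep: "is_hnf M \<Longrightarrow> \<not> hstep M p M'"
  unfolding is_hnf_iff hstep_iff by (metis absn_hnf_neq_redex)

lemma hred_hnf_unique:
  "hred M s N \<Longrightarrow> is_hnf N \<Longrightarrow> hred M s' N' \<Longrightarrow> is_hnf N' \<Longrightarrow> s = s' \<and> N = N'"
proof (induct arbitrary: s' rule: hred.induct)
  case (hred_refl M)
  from hred_refl(2) show ?case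
    by cases (use hred_refl hnf_no_hstep in auto)
next
  case (hred_step M p M' s N)
  from hred_step(5) show ?case
  proof cases
    case hred_refl
    then show ?thesis using hred_step(1,6) hnf_no_hstep by blast
  next
    case (hred_step p' M'' s'')
    with hstep_det[OF \<open>hstep M p M'\<close>] show ?thesis
      using hred_step.hyps(3) \<open>is_hnf N\<close> \<open>is_hnf N'\<close> by auto
  qed
qed

lemma hnf_red_eq: "hred M s N \<Longrightarrow> is_hnf N \<Longrightarrow> hnf_red M = (s, N)"
  unfolding hnf_red_def by (rule the_equality) (auto dest: hred_hnf_unique)

lemma hstep_beta: "hstep M p M' \<Longrightarrow> beta M M'"
  by (induct rule: hstep.induct) (auto intro: beta.intros)

lemma hred_reds: "hred M s N \<Longrightarrow> beta_reds M N"
  by (induct rule: hred.induct) (auto dest: hstep_beta intro: converse_rtranclp_into_rtranclp)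

lemma hred_Abs: "hred M s N \<Longrightarrow> hred (Abs M) (map (\<lambda>(p, K). (0 # p, Abs K)) s) (Abs N)"
  by (induct rule: hred.induct) (auto intro: hred.intros hstep_abs)

lemma hred_not_Abs: "hred M s N \<Longrightarrow> (\<And>P. N \<noteq> Abs P) \<Longrightarrow> M \<noteq> Abs P"
  by (induct arbitrary: P rule: hred.induct) (auto elim: hstep.cases)

lemma hred_AppL:
  "hred M s N \<Longrightarrow> (\<And>P. N \<noteq> Abs P) \<Longrightarrow> hred (App M Q) (map (\<lambda>(p, K). (1 # p, App K Q)) s) (App N Q)"
proof (induct rule: hred.induct)
  case (hred_step M p M' s N)
  then have "M \<noteq> Abs P" for P using hred_not_Abs[OF hred.hred_step] by blast
  with hred_step(1) obtain A B where "M = App A B" by (cases rule: hstep.cases) auto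
  from hred.hred_step[OF hstep_app[OF hred_step(1) this] hred_step(3)[OF hred_step(4)]]
  show ?case by simp
qed (auto intro: hred.intros)

lemma is_hnf_Abs [simp]: "is_hnf (Abs M) \<longleftrightarrow> is_hnf M"
  by (auto simp: is_hnf_def split: prod.splits)

section \<open>Reductions with counted steps\<close>

lemma relpowp_map: "(\<And>x y. R x y \<Longrightarrow> S (f x) (f y)) \<Longrightarrow> (R ^^ n) x y \<Longrightarrow> (S ^^ n) (f x) (f y)"
  by (induct n arbitrary: y) (auto elim!: relpowp_Suc_E intro: relpowp_Suc_I)

inductive list_relpow :: "('a \<Rightarrow> 'a \<Rightarrow> bool) \<Rightarrow> 'a list \<Rightarrow> 'a list \<Rightarrow> nat \<Rightarrow> bool" for R where
  Nil: "list_relpow R [] [] 0"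
| Cons: "(R ^^ a) x y \<Longrightarrow> list_relpow R xs ys c \<Longrightarrow> list_relpow R (x # xs) (y # ys) (a + c)"

lemma list_relpow_refl: "list_relpow R xs xs 0"
  by (induct xs) (auto intro: list_relpow.intros list_relpow.Cons[of 0, simplified])

lemma list_relpow_length: "list_relpow R xs ys c \<Longrightarrow> length xs = length ys"
  by (induct rule: list_relpow.induct) auto

lemma list_relpow_append:
  "list_relpow R xs ys c \<Longrightarrow> list_relpow R xs' ys' d \<Longrightarrow> list_relpow R (xs @ xs') (ys @ ys') (c + d)"
  by (induct rule: list_relpow.induct) (auto simp: add.assoc intro: list_relpow.intros)

lemma list_relpow_trans:
  "list_relpow R xs ys c \<Longrightarrow> list_relpow R ys zs d \<Longrightarrow> list_relpow R xs zs (c + d)"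
proof (induct arbitrary: zs d rule: list_relpow.induct)
  case Nil
  then show ?case by (cases rule: list_relpow.cases) (auto intro: list_relpow.Nil)
next
  case (Cons a x y xs ys c)
  from Cons.prems obtain b z zs' e where "zs = z # zs'" "d = b + e" "(R ^^ b) y z" "list_relpow R ys zs' e"
    by (cases rule: list_relpow.cases) auto
  moreover from Cons.hyps(3)[OF this(4)] have "list_relpow R xs zs' (c + e)"
    by (simp add: ac_simps)
  ultimately show ?case
    using list_relpow.Cons[OF relpowp_trans[OF Cons.hyps(1)], of b z xs zs' "c + e"]
    by (simp add: ac_simps)
qed

lemma list_relpow_nth:
  "list_relpow R xs ys c \<Longrightarrow>
    \<exists>ks. length ks = length xs \<and> sum_list ks = c \<and> (\<forall>i < length xs. (R ^^ (ks ! i)) (xs ! i) (ys ! i))"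
proof (induct rule: list_relpow.induct)
  case (Cons a x y xs ys c)
  then obtain ks where "length ks = length xs" "sum_list ks = c"
    "\<forall>i < length xs. (R ^^ (ks ! i)) (xs ! i) (ys ! i)" by blast
  with Cons.hyps(1) show ?case
    by (intro exI[of _ "a # ks"]) (auto simp: nth_Cons split: nat.splits)
qed simp

lemma list_relpow_imp_list_all2: "list_relpow R xs ys c \<Longrightarrow> list_all2 R\<^sup>*\<^sup>* xs ys"
  by (induct rule: list_relpow.induct) (auto dest: relpowp_imp_rtranclp)

lemma relpowp_beta_App:
  "(beta ^^ a) M M' \<Longrightarrow> (beta ^^ b) N N' \<Longrightarrow> (beta ^^ (a + b)) (App M N) (App M' N')"
  using relpowp_trans relpowp_map[of beta beta "\<lambda>M. App M N"] relpowp_map[of beta beta "App M'"]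
  by (meson beta_appL beta_appR)

lemma relpowp_beta_apps:
  "list_relpow beta As Bs c \<Longrightarrow> (beta ^^ a) M N \<Longrightarrow> (beta ^^ (a + c)) (apps M As) (apps N Bs)"
proof (induct arbitrary: M N a rule: list_relpow.induct)
  case (Cons b x y xs ys c)
  show ?case using Cons.hyps(3)[OF relpowp_beta_App[OF Cons.prems Cons.hyps(1)]]
    by (simp add: ac_simps)
qed simp

inductive_cases beta_AppE: "beta (App M N) L"

lemma beta_apps_cases:
  "beta (apps M As) N \<Longrightarrow>
    (\<exists>M'. beta M M' \<and> N = apps M' As) \<or> (\<exists>Bs. list_relpow beta As Bs 1 \<and> N = apps M Bs) \<or>
    (\<exists>P A As'. M = Abs P \<and> As = A # As' \<and> N = apps (subst P A 0) As')"
proof (induct As arbitrary: N rule: rev_induct)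
  case (snoc A As)
  from snoc.prems have "beta (App (apps M As) A) N" by simp
  then show ?case
  proof (cases rule: beta_AppE)
    fix P assume "apps M As = Abs P" "N = subst P A 0"
    then show ?thesis by simp
  next
    fix X assume N: "N = App X A" and "beta (apps M As) X"
    from snoc.hyps[OF this(2)] show ?thesis
    proof (elim disjE exE conjE)
      fix Bs assume "list_relpow beta As Bs 1" "X = apps M Bs"
      moreover from this(1) have "list_relpow beta (As @ [A]) (Bs @ [A]) 1"
        using list_relpow_append[OF _ list_relpow_refl] by fastforce
      ultimately show ?thesis using N by auto
    qed (use N in auto)
  next
    fix A' assume "N = App (apps M As) A'" "beta A A'"
    moreover from this(2) have "list_relpow beta [A] [A'] 1"
      using list_relpow.Cons[where a=1, OF _ list_relpow.Nil] by (simp add: relcompp_apply)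
    then have "list_relpow beta (As @ [A]) (As @ [A']) 1"
      using list_relpow_append[OF list_relpow_refl] by fastforce
    ultimately show ?thesis by auto
  qed
qed (auto elim: beta.cases)

lemma beta_absn_cases: "beta (absn n M) N \<Longrightarrow> \<exists>M'. beta M M' \<and> N = absn n M'"
  by (induct n arbitrary: N) (auto elim: beta.cases)

lemma relpowp_beta_hnf_inv:
  "(beta ^^ k) (absn n (apps (Var y) As)) N \<Longrightarrow>
    \<exists>Bs. N = absn n (apps (Var y) Bs) \<and> list_relpow beta As Bs k"
proof (induct k arbitrary: N)
  case 0
  then show ?case using list_relpow_refl by auto
next
  case (Suc k)
  from Suc.prems obtain L where "(beta ^^ k) (absn n (apps (Var y) As)) L" "beta L N"
    by (rule relpowp_Suc_E)
  with Suc.hyps obtain Bs where "beta L N" "L = absn n (apps (Var y) Bs)" "list_relpow beta As Bs k"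
    by blast
  moreover from this(1,2) obtain Cs where "list_relpow beta Bs Cs 1" "N = absn n (apps (Var y) Cs)"
    by (auto dest!: beta_absn_cases beta_apps_cases elim: beta.cases)
  ultimately show ?case using list_relpow_trans by fastforce
qed

lemma reds_hnf_inv:
  "beta_reds (absn n (apps (Var y) As)) N \<Longrightarrow>
    \<exists>Bs. N = absn n (apps (Var y) Bs) \<and> list_all2 beta_reds As Bs"
  by (auto dest!: rtranclp_imp_relpowp relpowp_beta_hnf_inv list_relpow_imp_list_all2)

lemma reds_hnf: "is_hnf M \<Longrightarrow> beta_reds M N \<Longrightarrow> is_hnf N"
  unfolding is_hnf_iff by (blast dest: reds_hnf_inv)

section \<open>Head normalisation\<close>

text \<open>\<open>head_std M N\<close>: \<open>N\<close> is reached from \<open>M\<close> by first contracting head redexes of spines and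
  then reducing the components independently. Every reduction can be rearranged this way, so a
  term that reduces to a head normal form is head normalising.\<close>
inductive head_std :: "dB \<Rightarrow> dB \<Rightarrow> bool" where
  hs_Var: "head_std (Var i) (Var i)"
| hs_Abs: "head_std M M' \<Longrightarrow> head_std (Abs M) (Abs M')"
| hs_App: "head_std M M' \<Longrightarrow> head_std N N' \<Longrightarrow> head_std (App M N) (App M' N')"
| hs_head: "head_std (apps (subst P Q 0) Rs) N \<Longrightarrow> head_std (apps (App (Abs P) Q) Rs) N"

lemma head_std_refl: "head_std M M"
  by (induct M) (auto intro: head_std.intros)

lemma head_std_lift: "head_std M M' \<Longrightarrow> head_std (lift M k) (lift M' k)"
proof (induct arbitrary: k rule: head_std.induct)
  case (hs_head P Q Rs N)
  then show ?case using head_std.hs_head[of "lift P (Suc k)" "lift Q k"] by (simp add: lift_subst)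
qed (auto intro: head_std.intros)

lemma head_std_subst:
  "head_std M M' \<Longrightarrow> head_std N N' \<Longrightarrow> head_std (subst M N k) (subst M' N' k)"
proof (induct arbitrary: N N' k rule: head_std.induct)
  case (hs_Var i)
  then show ?case by (simp add: head_std_refl)
next
  case (hs_head P Q Rs L)
  then show ?case
    using head_std.hs_head[of "subst P (lift N 0) (Suc k)" "subst Q N k"] subst_subst[of 0 k P N Q]
    by simp
qed (simp_all add: head_std.intros head_std_lift)

lemma head_std_App_Abs:
  "head_std M L \<Longrightarrow> L = Abs P' \<Longrightarrow> head_std N N' \<Longrightarrow> head_std (App M N) (subst P' N' 0)"
proof (induct arbitrary: P' rule: head_std.induct)
  case (hs_Abs M M')
  then show ?case using head_std.hs_head[of M N "[]"] by (simp add: head_std_subst)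
next
  case (hs_head P Q Rs L)
  then show ?case using head_std.hs_head[of P Q "Rs @ [N]"] by simp
qed auto

lemma head_std_beta: "head_std M L \<Longrightarrow> beta L L' \<Longrightarrow> head_std M L'"
proof (induct arbitrary: L' rule: head_std.induct)
  case (hs_Var i)
  then show ?case by (auto elim: beta.cases)
next
  case (hs_Abs M M')
  then show ?case by (auto elim: beta.cases intro: head_std.intros)
next
  case (hs_App M M' N N')
  from hs_App.prems show ?case
    by (cases rule: beta.cases) (auto intro: head_std.intros head_std_App_Abs hs_App.hyps)
qed (auto intro: head_std.intros)

lemma reds_imp_head_std: "beta_reds M N \<Longrightarrow> head_std M N"
  by (induct rule: rtranclp_induct) (auto intro: head_std_refl head_std_beta)

lemma is_hnf_App: "is_hnf (App M N) \<longleftrightarrow> is_hnf M \<and> (\<forall>P. M \<noteq> Abs P)"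
  by (cases M) (auto simp: is_hnf_def split: prod.splits)

text \<open>Whether the head normal form is an abstraction is tracked so that the head reduction of the
  function part of an application can be continued under the application.\<close>
lemma head_std_hnf:
  "head_std M L \<Longrightarrow> is_hnf L \<Longrightarrow> \<exists>s N. hred M s N \<and> is_hnf N \<and> ((\<exists>P. N = Abs P) \<longleftrightarrow> (\<exists>P. L = Abs P))"
proof (induct rule: head_std.induct)
  case (hs_Var i)
  then show ?case by (blast intro: hred.intros)
next
  case (hs_Abs M M')
  then obtain s N where "hred M s N" "is_hnf N" by auto
  then show ?case using hred_Abs by (metis is_hnf_Abs)
next
  case (hs_App M M' N N')
  then have "is_hnf M'" "\<forall>P. M' \<noteq> Abs P" by (simp_all add: is_hnf_App)
  with hs_App.hyps(2) obtain s K where "hred M s K" "is_hnf K" "\<forall>P. K \<noteq> Abs P" by auto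
  moreover from this have "is_hnf (App K N)" by (simp add: is_hnf_App)
  ultimately show ?case using hred_AppL[of M s K N] by blast
next
  case (hs_head P Q Rs N)
  then obtain s K where "hred (apps (subst P Q 0) Rs) s K" "is_hnf K"
    "(\<exists>P'. K = Abs P') \<longleftrightarrow> (\<exists>P'. N = Abs P')"
    by blast
  then show ?case using hred.hred_step[OF hstep_apps] by blast
qed

lemma has_hnf_iff_hred: "has_hnf M \<longleftrightarrow> (\<exists>s N. hred M s N \<and> is_hnf N)"
proof
  assume "has_hnf M"
  then obtain K where "beta_conv M K" "is_hnf K" unfolding has_hnf_def by blast
  with church_rosser obtain L where "beta_reds M L" "is_hnf L" by (blast dest: reds_hnf)
  then show "\<exists>s N. hred M s N \<and> is_hnf N" by (blast dest: reds_imp_head_std head_std_hnf)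
next
  assume "\<exists>s N. hred M s N \<and> is_hnf N"
  then show "has_hnf M" unfolding has_hnf_def by (blast dest: hred_reds intro: rtranclp_into_equivclp)
qed

lemma has_hnf_conv: "beta_conv M N \<Longrightarrow> has_hnf M \<longleftrightarrow> has_hnf N"
  unfolding has_hnf_def by (meson equivclp_sym equivclp_trans)

lemma BTa_hred:
  "hred M s H \<Longrightarrow> is_hnf H \<Longrightarrow> BTa M = Node (map fst s) (hnf_nabs H) (hnf_head H) (map BTa (hnf_args H))"
  by (subst BTa.code) (auto simp: has_hnf_iff_hred hnf_red_eq)

lemma BTa_no_hnf: "\<not> has_hnf M \<Longrightarrow> BTa M = Bot"
  by (subst BTa.code) simp

section \<open>Tracking head reduction along a reduction\<close>

definition simple_at :: "dB \<Rightarrow> pos \<Rightarrow> bool" where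
  "simple_at M p \<longleftrightarrow> (\<exists>R. subterm_at M p = Some R \<and> simple_redex R)"

lemma subterm_at_redex:
  "subterm_at (absn n (apps (App (Abs P) Q) Rs)) (replicate n 0 @ replicate (length Rs) 1) =
    Some (App (Abs P) Q)"
proof -
  have "subterm_at (apps M Rs) (replicate (length Rs) 1) = Some M" for M
    by (induct Rs rule: rev_induct) auto
  then show ?thesis by (induct n) auto
qed

lemma simple_at_redex:
  "simple_at (absn n (apps (App (Abs P) Q) Rs)) (replicate n 0 @ replicate (length Rs) 1) \<longleftrightarrow>
    occ 0 P \<le> 1 \<or> beta_nf Q"
  unfolding simple_at_def subterm_at_redex by (simp add: simple_redex_def)

lemma relpowp_beta_redex_spine:
  "(beta ^^ k) (absn n (apps (Abs P) As)) N \<Longrightarrow>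
    \<exists>P' As' a c. (beta ^^ a) P P' \<and> list_relpow beta As As' c \<and>
      (N = absn n (apps (Abs P') As') \<and> a + c = k \<or>
       (\<exists>Q' Rs' j. As' = Q' # Rs' \<and> a + c + 1 + j = k \<and>
          (beta ^^ j) (absn n (apps (subst P' Q' 0) Rs')) N))"
proof (induct k arbitrary: P As)
  case 0
  then show ?case using list_relpow_refl by fastforce
next
  case (Suc k)
  from Suc.prems obtain L where "beta (absn n (apps (Abs P) As)) L" "(beta ^^ k) L N"
    by (rule relpowp_Suc_E2)
  then obtain X where step: "beta (apps (Abs P) As) X" and L: "L = absn n X" and rest: "(beta ^^ k) L N"
    by (blast dest: beta_absn_cases)
  from beta_apps_cases[OF step] show ?case
  proof (elim disjE exE conjE)
    fix M' assume "beta (Abs P) M'" "X = apps M' As"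
    then obtain P2 where P2: "beta P P2" "X = apps (Abs P2) As" by (auto elim: beta.cases)
    with Suc.hyps[of P2 As] rest L obtain P' As' a c where "(beta ^^ a) P2 P'"
      "list_relpow beta As As' c" "N = absn n (apps (Abs P') As') \<and> a + c = k \<or>
       (\<exists>Q' Rs' j. As' = Q' # Rs' \<and> a + c + 1 + j = k \<and>
          (beta ^^ j) (absn n (apps (subst P' Q' 0) Rs')) N)"
      by blast
    then show ?case using relpowp_Suc_I2[where P=beta, OF P2(1)]
      by (intro exI[of _ P'] exI[of _ As'] exI[of _ "Suc a"] exI[of _ c]) auto
  next
    fix As2 assume As2: "list_relpow beta As As2 1" "X = apps (Abs P) As2"
    with Suc.hyps[of P As2] rest L obtain P' As' a c where "(beta ^^ a) P P'"
      "list_relpow beta As2 As' c" "N = absn n (apps (Abs P') As') \<and> a + c = k \<or>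
       (\<exists>Q' Rs' j. As' = Q' # Rs' \<and> a + c + 1 + j = k \<and>
          (beta ^^ j) (absn n (apps (subst P' Q' 0) Rs')) N)"
      by blast
    then show ?case using list_relpow_trans[OF As2(1)]
      by (intro exI[of _ P'] exI[of _ As'] exI[of _ a] exI[of _ "1 + c"]) auto
  next
    fix P0 Q Rs assume "Abs P = Abs P0" "As = Q # Rs" "X = apps (subst P0 Q 0) Rs"
    with rest L show ?case
      using list_relpow_refl by (intro exI[of _ P] exI[of _ As] exI[of _ 0] exI[of _ 0]) auto
  qed
qed

lemma subst_occ0: "occ k P = 0 \<Longrightarrow> subst P Q k = subst P Q' k"
  by (induct P arbitrary: k Q Q') auto

lemma subst_occ_le1_beta:
  "occ k P \<le> 1 \<Longrightarrow> beta Q Q' \<Longrightarrow> subst P Q k = subst P Q' k \<or> beta (subst P Q k) (subst P Q' k)"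
proof (induct P arbitrary: k Q Q')
  case (App P1 P2)
  then have "occ k P1 = 0 \<and> occ k P2 \<le> 1 \<or> occ k P2 = 0 \<and> occ k P1 \<le> 1" by auto
  then show ?case
  proof
    assume "occ k P1 = 0 \<and> occ k P2 \<le> 1"
    then show ?thesis using App.hyps(2)[of k Q Q'] App.prems(2) subst_occ0[of k P1 Q Q']
      by (auto intro: beta_appR)
  next
    assume "occ k P2 = 0 \<and> occ k P1 \<le> 1"
    then show ?thesis using App.hyps(1)[of k Q Q'] App.prems(2) subst_occ0[of k P2 Q Q']
      by (auto intro: beta_appL)
  qed
next
  case (Abs P)
  then show ?case using Abs.hyps[of "Suc k" "lift Q 0" "lift Q' 0"] by (auto intro: beta_abs lift_beta)
qed simp

lemma relpowp_subst_occ_le1: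
  "occ k P \<le> 1 \<Longrightarrow> (beta ^^ b) Q Q' \<Longrightarrow> \<exists>m \<le> b. (beta ^^ m) (subst P Q k) (subst P Q' k)"
proof (induct b arbitrary: Q)
  case (Suc b)
  from Suc.prems(2) obtain Q2 where "beta Q Q2" "(beta ^^ b) Q2 Q'" by (rule relpowp_Suc_E2)
  with Suc obtain m where "m \<le> b" "(beta ^^ m) (subst P Q2 k) (subst P Q' k)" by blast
  with subst_occ_le1_beta[OF Suc.prems(1) \<open>beta Q Q2\<close>] show ?case
    by (metis le_SucI Suc_le_mono relpowp_Suc_I2)
qed simp

lemma relpowp_nf: "beta_nf Q \<Longrightarrow> (beta ^^ b) Q Q' \<Longrightarrow> Q' = Q"
  by (induct b arbitrary: Q') (auto simp: beta_nf_def)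

text \<open>Contracting a simple redex after reducing its parts costs no more steps than the parts did.\<close>
lemma relpowp_subst:
  assumes "(beta ^^ a) P P'" "(beta ^^ b) Q Q'"
  shows "\<exists>m. (beta ^^ m) (subst P Q 0) (subst P' Q' 0) \<and> (occ 0 P \<le> 1 \<or> beta_nf Q \<longrightarrow> m \<le> a + b)"
proof (cases "occ 0 P \<le> 1")
  case True
  then obtain m where "m \<le> b" "(beta ^^ m) (subst P Q 0) (subst P Q' 0)"
    using relpowp_subst_occ_le1 assms(2) by blast
  moreover have "(beta ^^ a) (subst P Q' 0) (subst P' Q' 0)"
    using relpowp_map[where R=beta and S=beta and f="\<lambda>M. subst M Q' 0", OF subst_beta assms(1)] .
  ultimately show ?thesis using relpowp_trans by fastforce
next
  case False
  obtain m' where "(beta ^^ m') (subst P Q 0) (subst P' Q' 0)"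
    using subst_reds assms by (blast dest: relpowp_imp_rtranclp rtranclp_imp_relpowp)
  show ?thesis
  proof (cases "beta_nf Q")
    case True
    from this assms(2) have "Q' = Q" by (rule relpowp_nf)
    then show ?thesis using relpowp_map[where R=beta and S=beta and f="\<lambda>M. subst M Q' 0", OF subst_beta assms(1)] by auto
  qed (use False \<open>(beta ^^ m') _ _\<close> in blast)
qed

lemma relpowp_absn: "(beta ^^ k) M M' \<Longrightarrow> (beta ^^ k) (absn n M) (absn n M')"
  by (rule relpowp_map[where R=beta and S=beta and f="absn n", OF absn_beta])

text \<open>Either the head redex of \<open>M\<close> survives the reduction and \<open>N\<close> contracts its residual at the
  same position, or the reduction contracts it itself.\<close>
lemma hstep_relpowp_track:
  assumes "hstep M p M1" "(beta ^^ k) M N"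
  shows "(\<exists>N1 m. hstep N p N1 \<and> (beta ^^ m) M1 N1 \<and> (simple_at M p \<longrightarrow> m \<le> k)) \<or>
    (\<exists>m. (beta ^^ m) M1 N \<and> (simple_at M p \<longrightarrow> m < k))"
proof -
  from assms(1) obtain n P Q Rs where M: "M = absn n (apps (App (Abs P) Q) Rs)"
    and M1: "M1 = absn n (apps (subst P Q 0) Rs)" and p: "p = replicate n 0 @ replicate (length Rs) 1"
    unfolding hstep_iff by blast
  have simple: "simple_at M p \<longleftrightarrow> occ 0 P \<le> 1 \<or> beta_nf Q"
    unfolding M p by (rule simple_at_redex)
  from assms(2) M have "(beta ^^ k) (absn n (apps (Abs P) (Q # Rs))) N" by simp
  from relpowp_beta_redex_spine[OF this] obtain P' As' a c where P': "(beta ^^ a) P P'"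
    and As': "list_relpow beta (Q # Rs) As' c"
    and cases: "N = absn n (apps (Abs P') As') \<and> a + c = k \<or>
      (\<exists>Q' Rs' j. As' = Q' # Rs' \<and> a + c + 1 + j = k \<and> (beta ^^ j) (absn n (apps (subst P' Q' 0) Rs')) N)"
    by blast
  from As' obtain b Q' c' Rs' where As'_eq: "As' = Q' # Rs'" and Q': "(beta ^^ b) Q Q'"
    and Rs': "list_relpow beta Rs Rs' c'" and c: "c = b + c'"
    by (cases rule: list_relpow.cases) auto
  obtain m where m: "(beta ^^ m) (subst P Q 0) (subst P' Q' 0)"
    and m_le: "occ 0 P \<le> 1 \<or> beta_nf Q \<longrightarrow> m \<le> a + b"
    using relpowp_subst[OF P' Q'] by blast
  define M1' where "M1' = absn n (apps (subst P' Q' 0) Rs')"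
  have M1_M1': "(beta ^^ (m + c')) M1 M1'"
    unfolding M1 M1'_def by (rule relpowp_absn[OF relpowp_beta_apps[OF Rs' m]])
  from cases show ?thesis
  proof
    assume "N = absn n (apps (Abs P') As') \<and> a + c = k"
    moreover have "length Rs' = length Rs" using list_relpow_length[OF Rs'] by simp
    ultimately have "hstep N p M1'" "a + c = k"
      unfolding hstep_iff M1'_def p As'_eq by (fastforce, simp)
    moreover have "simple_at M p \<longrightarrow> m + c' \<le> k"
      using simple m_le c \<open>a + c = k\<close> by auto
    ultimately show ?thesis using M1_M1' by blast
  next
    assume "\<exists>Q' Rs' j. As' = Q' # Rs' \<and> a + c + 1 + j = k \<and>
      (beta ^^ j) (absn n (apps (subst P' Q' 0) Rs')) N"
    then obtain j where "a + c + 1 + j = k" "(beta ^^ j) M1' N"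
      unfolding As'_eq M1'_def by blast
    then have "(beta ^^ (m + c' + j)) M1 N" using relpowp_trans[OF M1_M1'] by blast
    moreover have "simple_at M p \<longrightarrow> m + c' + j < k"
      using simple m_le c \<open>a + c + 1 + j = k\<close> by auto
    ultimately show ?thesis by blast
  qed
qed

lemma hred_relpowp_track:
  "hred M s H \<Longrightarrow> is_hnf H \<Longrightarrow> (beta ^^ k) M N \<Longrightarrow>
    \<exists>s' H' k'. hred N s' H' \<and> is_hnf H' \<and> subseq (map fst s') (map fst s) \<and> (beta ^^ k') H H' \<and>
      ((\<forall>(p, K) \<in> set s. simple_at K p) \<longrightarrow> k' + (length s - length s') \<le> k)"
proof (induct arbitrary: k N rule: hred.induct)
  case (hred_refl M)
  from hred_refl(1) relpowp_imp_rtranclp[OF hred_refl(2)] have "is_hnf N" by (rule reds_hnf)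
  with hred_refl(2) show ?case
    by (intro exI[of _ "[]"] exI[of _ N] exI[of _ k]) (simp add: hred.hred_refl)
next
  case (hred_step M p M1 s H)
  let ?simple = "\<lambda>s. \<forall>(p, K) \<in> set s. simple_at K p"
  from hstep_relpowp_track[OF hred_step(1,5)] show ?case
  proof (elim disjE exE conjE)
    fix N1 m assume N1: "hstep N p N1" "(beta ^^ m) M1 N1" "simple_at M p \<longrightarrow> m \<le> k"
    with hred_step(3)[OF hred_step(4)] obtain s' H' k' where IH: "hred N1 s' H'" "is_hnf H'"
      "subseq (map fst s') (map fst s)" "(beta ^^ k') H H'" "?simple s \<longrightarrow> k' + (length s - length s') \<le> m"
      by blast
    have "hred N ((p, N) # s') H'" using N1(1) IH(1) by (rule hred.hred_step)
    moreover have "subseq (map fst ((p, N) # s')) (map fst ((p, M) # s))" using IH(3) by simp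
    moreover have "?simple ((p, M) # s) \<longrightarrow> k' + (length ((p, M) # s) - length ((p, N) # s')) \<le> k"
      using IH(5) N1(3) by auto
    ultimately show ?case using IH(2,4) by blast
  next
    fix m assume N: "(beta ^^ m) M1 N" "simple_at M p \<longrightarrow> m < k"
    with hred_step(3)[OF hred_step(4)] obtain s' H' k' where IH: "hred N s' H'" "is_hnf H'"
      "subseq (map fst s') (map fst s)" "(beta ^^ k') H H'" "?simple s \<longrightarrow> k' + (length s - length s') \<le> m"
      by blast
    have "subseq (map fst s') (map fst ((p, M) # s))" using IH(3) by (simp add: list_emb_Cons)
    moreover have "length s' \<le> length s" using list_emb_length[OF IH(3)] by simp
    then have "?simple ((p, M) # s) \<longrightarrow> k' + (length ((p, M) # s) - length s') \<le> k"
      using IH(5) N(2) by auto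
    ultimately show ?case using IH(1,2,4) by blast
  qed
qed

section \<open>Erased Boehm trees of convertible terms\<close>

lemma hred_reds_track:
  assumes "hred M s H" "is_hnf H" "beta_reds M N"
  shows "\<exists>s' H'. hred N s' H' \<and> is_hnf H' \<and> subseq (map fst s') (map fst s) \<and> beta_reds H H'"
proof -
  from assms(3) obtain k where "(beta ^^ k) M N" by (blast dest: rtranclp_imp_relpowp)
  from hred_relpowp_track[OF assms(1,2) this] show ?thesis by (blast dest: relpowp_imp_rtranclp)
qed

lemma common_reduct_imp_conv: "beta_reds M L \<Longrightarrow> beta_reds N L \<Longrightarrow> beta_conv M N"
  by (meson equivclp_sym equivclp_trans rtranclp_into_equivclp)

lemma list_all2_common_reduct_imp_conv:
  "list_all2 beta_reds As Cs \<Longrightarrow> list_all2 beta_reds Bs Cs \<Longrightarrow> list_all2 beta_conv As Bs"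
  by (induct As Cs arbitrary: Bs rule: list_all2_induct)
    (auto simp: list_all2_Cons2 intro: common_reduct_imp_conv)

lemma conv_hnfs:
  assumes "beta_conv M N" "hred M s H" "is_hnf H" "hred N t K" "is_hnf K"
  shows "\<exists>n y As Bs. H = absn n (apps (Var y) As) \<and> K = absn n (apps (Var y) Bs) \<and>
    list_all2 beta_conv As Bs"
proof -
  from church_rosser[OF assms(1)] obtain L where "beta_reds M L" "beta_reds N L" by blast
  then obtain s' H' t' K' where "hred L s' H'" "is_hnf H'" "beta_reds H H'"
    and "hred L t' K'" "is_hnf K'" "beta_reds K K'"
    using hred_reds_track assms(2-5) by blast
  then have "beta_reds H H'" "beta_reds K H'" using hred_hnf_unique by blast+
  obtain n y As n' y' Bs where H: "H = absn n (apps (Var y) As)" and K: "K = absn n' (apps (Var y') Bs)"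
    using assms(3,5) unfolding is_hnf_iff by blast
  obtain Cs Cs' where "list_all2 beta_reds As Cs" "H' = absn n (apps (Var y) Cs)"
    and "list_all2 beta_reds Bs Cs'" "H' = absn n' (apps (Var y') Cs')"
    using reds_hnf_inv \<open>beta_reds H H'\<close> \<open>beta_reds K H'\<close> unfolding H K by blast
  moreover from this(2,4) have "n = n'" "y = y'" "Cs = Cs'"
    using absn_apps_inj[of n "Var y" Cs n' "Var y'" Cs'] by auto
  ultimately have "list_all2 beta_conv As Bs"
    using list_all2_common_reduct_imp_conv by blast
  with H K \<open>n = n'\<close> \<open>y = y'\<close> show ?thesis by blast
qed

lemma erase_simps [simp]: "erase Bot = Bot" "erase (Node a n y ts) = Node () n y (map erase ts)"
  by (simp_all add: erase_def)

lemma erase_BTa_conv: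
  assumes "beta_conv M N"
  shows "erase (BTa M) = erase (BTa N)"
proof (rule bt.coinduct[where R="\<lambda>X Y. \<exists>M N. beta_conv M N \<and> X = erase (BTa M) \<and> Y = erase (BTa N)"])
  show "\<exists>M' N'. beta_conv M' N' \<and> erase (BTa M) = erase (BTa M') \<and> erase (BTa N) = erase (BTa N')"
    using assms by blast
next
  fix X Y assume "\<exists>M N. beta_conv M N \<and> X = erase (BTa M) \<and> Y = erase (BTa N)"
  then obtain M N where MN: "beta_conv M N" "X = erase (BTa M)" "Y = erase (BTa N)" by blast
  show "(X = Bot) = (Y = Bot) \<and> (X \<noteq> Bot \<longrightarrow> Y \<noteq> Bot \<longrightarrow>
    un_Node1 X = un_Node1 Y \<and> un_Node2 X = un_Node2 Y \<and> un_Node3 X = un_Node3 Y \<and>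
    list_all2 (\<lambda>X Y. \<exists>M N. beta_conv M N \<and> X = erase (BTa M) \<and> Y = erase (BTa N))
      (un_Node4 X) (un_Node4 Y))"
  proof (cases "has_hnf M")
    case False
    with has_hnf_conv[OF MN(1)] show ?thesis using MN by (simp add: BTa_no_hnf)
  next
    case True
    with has_hnf_conv[OF MN(1)] obtain s H t K where h: "hred M s H" "is_hnf H" "hred N t K" "is_hnf K"
      unfolding has_hnf_iff_hred by blast
    from conv_hnfs[OF MN(1) h] obtain n y As Bs where
      HK: "H = absn n (apps (Var y) As)" "K = absn n (apps (Var y) Bs)" "list_all2 beta_conv As Bs"
      by blast
    from HK(3) have "list_all2 (\<lambda>X Y. \<exists>M N. beta_conv M N \<and> X = erase (BTa M) \<and> Y = erase (BTa N))
        (map erase (map BTa As)) (map erase (map BTa Bs))"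
      unfolding list_all2_map1 list_all2_map2 by (rule list_all2_mono) blast
    moreover have "X = Node () n y (map erase (map BTa As))" "Y = Node () n y (map erase (map BTa Bs))"
      using MN(2,3) BTa_hred[OF h(1,2)] BTa_hred[OF h(3,4)] HK(1,2) by simp_all
    ultimately show ?thesis by simp
  qed
qed

section \<open>Positions where annotations differ\<close>

definition ann_mismatch :: "(pos list \<Rightarrow> pos list \<Rightarrow> bool) \<Rightarrow> pos list bt \<Rightarrow> pos list bt \<Rightarrow> pos set" where
  "ann_mismatch R T1 T2 = {p. \<not> ann_cond R T1 T2 p}"

lemma replicate_1_2_inj: "replicate a (1::nat) @ 2 # q = replicate b 1 @ 2 # q' \<Longrightarrow> a = b \<and> q = q'"
proof (induct a arbitrary: b)
  case 0
  then show ?case by (cases b) auto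
next
  case (Suc a)
  then show ?case by (cases b) auto
qed

lemma cpos_append_inj:
  assumes "i < m" "j < m" "cpos n m i @ q = cpos n m j @ q'"
  shows "i = j \<and> q = q'"
proof -
  from assms(3) have "replicate (m - Suc i) (1::nat) @ 2 # q = replicate (m - Suc j) 1 @ 2 # q'"
    by (simp add: cpos_def)
  then have "m - Suc i = m - Suc j" "q = q'" by (blast dest: replicate_1_2_inj)+
  with assms(1,2) show ?thesis by simp
qed

lemma cpos_not_Nil [simp]: "cpos n m i \<noteq> []"
  by (simp add: cpos_def)

lemma length_cpos_append: "length q < length (cpos n m i @ q)"
  by (simp add: cpos_def)

lemma ann_at_Bot [simp]: "\<not> ann_at Bot p a"
  by (auto elim: ann_at.cases)

lemma ann_at_Node_iff:
  "ann_at (Node a n y ts) p b \<longleftrightarrow>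
    (p = [] \<and> b = a) \<or> (\<exists>i q. i < length ts \<and> p = cpos n (length ts) i @ q \<and> ann_at (ts ! i) q b)"
  by (auto elim: ann_at.cases intro: ann_at.intros)

lemma ann_at_Node_child:
  "i < length ts \<Longrightarrow> ann_at (Node a n y ts) (cpos n (length ts) i @ q) b \<longleftrightarrow> ann_at (ts ! i) q b"
  unfolding ann_at_Node_iff by (auto dest: cpos_append_inj)

lemma ann_at_unique: "ann_at T p a \<Longrightarrow> ann_at T p b \<Longrightarrow> a = b"
proof (induct arbitrary: b rule: ann_at.induct)
  case (ann_root a n y ts)
  then show ?case by (simp add: ann_at_Node_iff)
next
  case (ann_child i ts q c a n y)
  then show ?case by (simp add: ann_at_Node_child)
qed

lemma ann_mismatch_Bot [simp]: "ann_mismatch R Bot Bot = {}"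
  by (simp add: ann_mismatch_def ann_cond_def)

lemma ann_cond_Node_Nil: "ann_cond R (Node a1 n y ts1) (Node a2 n' y' ts2) [] \<longleftrightarrow> R a1 a2"
  by (simp add: ann_cond_def ann_at_Node_iff)

lemma ann_cond_Node_child:
  "i < length ts1 \<Longrightarrow> length ts2 = length ts1 \<Longrightarrow>
    ann_cond R (Node a1 n y ts1) (Node a2 n y' ts2) (cpos n (length ts1) i @ q) \<longleftrightarrow>
    ann_cond R (ts1 ! i) (ts2 ! i) q"
proof -
  assume i: "i < length ts1" and len: "length ts2 = length ts1"
  have "ann_at (Node a2 n y' ts2) (cpos n (length ts1) i @ q) b \<longleftrightarrow> ann_at (ts2 ! i) q b" for b
    using ann_at_Node_child[of i ts2 a2 n y' q b] i len by simp
  then show ?thesis using ann_at_Node_child[OF i] by (simp add: ann_cond_def)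
qed

lemma ann_cond_Node_other:
  "p \<noteq> [] \<Longrightarrow> \<nexists>i q. i < length ts1 \<and> p = cpos n (length ts1) i @ q \<Longrightarrow> length ts1 = length ts2 \<Longrightarrow>
    ann_cond R (Node a1 n y ts1) (Node a2 n y' ts2) p"
proof -
  assume p: "p \<noteq> []" and not_child: "\<nexists>i q. i < length ts1 \<and> p = cpos n (length ts1) i @ q"
    and len: "length ts1 = length ts2"
  have "\<not> ann_at (Node a1 n y ts1) p b" "\<not> ann_at (Node a2 n y' ts2) p b" for b
    using p not_child unfolding ann_at_Node_iff len by blast+
  then show ?thesis by (simp add: ann_cond_def)
qed

lemma ann_mismatch_Node:
  assumes "length ts1 = length ts2"
  shows "ann_mismatch R (Node a1 n y ts1) (Node a2 n y' ts2) =
    {p. p = [] \<and> \<not> R a1 a2} \<union>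
    (\<Union>i<length ts1. (\<lambda>q. cpos n (length ts1) i @ q) ` ann_mismatch R (ts1 ! i) (ts2 ! i))"
    (is "?lhs = ?root \<union> ?children")
proof (intro set_eqI)
  fix p
  consider "p = []" | i q where "i < length ts1" "p = cpos n (length ts1) i @ q"
    | "p \<noteq> []" "\<nexists>i q. i < length ts1 \<and> p = cpos n (length ts1) i @ q"
    by blast
  then show "p \<in> ?lhs \<longleftrightarrow> p \<in> ?root \<union> ?children"
  proof cases
    case 1
    then have "p \<notin> ?children" by auto
    with 1 show ?thesis by (simp add: ann_mismatch_def ann_cond_Node_Nil)
  next
    case 2
    have "p \<in> ?children \<longleftrightarrow> q \<in> ann_mismatch R (ts1 ! i) (ts2 ! i)"
    proof
      assume "p \<in> ?children"
      then obtain j q' where "j < length ts1" "q' \<in> ann_mismatch R (ts1 ! j) (ts2 ! j)"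
        "p = cpos n (length ts1) j @ q'" by blast
      with 2 cpos_append_inj[of j "length ts1" i n q' q] show "q \<in> ann_mismatch R (ts1 ! i) (ts2 ! i)"
        by simp
    qed (use 2 in blast)
    moreover have "p \<in> ?lhs \<longleftrightarrow> q \<in> ann_mismatch R (ts1 ! i) (ts2 ! i)"
      using 2 assms[symmetric] by (simp add: ann_mismatch_def ann_cond_Node_child)
    moreover have "p \<notin> ?root" using 2 by simp
    ultimately show ?thesis by blast
  next
    case 3
    have "ann_cond R (Node a1 n y ts1) (Node a2 n y' ts2) p" by (rule ann_cond_Node_other[OF 3 assms])
    then have "p \<notin> ?lhs" by (simp add: ann_mismatch_def)
    moreover have "p \<notin> ?children"
    proof
      assume "p \<in> ?children"
      then obtain j q where "j < length ts1" "p = cpos n (length ts1) j @ q" by blast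
      with 3(2) show False by blast
    qed
    ultimately show ?thesis using 3(1) by blast
  qed
qed

lemma ann_mismatch_trans:
  assumes "\<And>a b c. R1 a b \<Longrightarrow> R2 b c \<Longrightarrow> R3 a c"
  shows "ann_mismatch R3 T1 T3 \<subseteq> ann_mismatch R1 T1 T2 \<union> ann_mismatch R2 T2 T3"
proof
  fix p assume "p \<in> ann_mismatch R3 T1 T3"
  then have "\<not> ann_cond R3 T1 T3 p" by (simp add: ann_mismatch_def)
  moreover have "ann_cond R1 T1 T2 p \<Longrightarrow> ann_cond R2 T2 T3 p \<Longrightarrow> ann_cond R3 T1 T3 p"
    unfolding ann_cond_def using assms ann_at_unique by metis
  ultimately show "p \<in> ann_mismatch R1 T1 T2 \<union> ann_mismatch R2 T2 T3"
    by (auto simp: ann_mismatch_def)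
qed

lemma ann_mismatch_eq_sym: "ann_mismatch (=) T1 T2 = ann_mismatch (=) T2 T1"
  unfolding ann_mismatch_def ann_cond_def by blast

section \<open>Annotations along a reduction\<close>

lemma BTa_hnf_Node:
  assumes "hred M s H" "H = absn n (apps (Var y) As)"
  shows "BTa M = Node (map fst s) n y (map BTa As)"
  using BTa_hred[OF assms(1)] assms(2) is_hnf_iff by auto

lemma ann_mismatch_subseq_reds:
  "beta_reds M N \<Longrightarrow> p \<notin> ann_mismatch subseq (BTa N) (BTa M)"
proof (induct p arbitrary: M N rule: length_induct)
  case (1 p)
  show ?case
  proof (cases "has_hnf M")
    case False
    moreover from this have "\<not> has_hnf N"
      using has_hnf_conv[OF rtranclp_into_equivclp[OF "1.prems"]] by simp
    ultimately show ?thesis by (simp add: BTa_no_hnf)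
  next
    case True
    then obtain s H where "hred M s H" "is_hnf H" by (auto simp: has_hnf_iff_hred)
    from hred_reds_track[OF this "1.prems"] obtain s' H' where
      track: "hred N s' H'" "is_hnf H'" "subseq (map fst s') (map fst s)" "beta_reds H H'"
      by blast
    obtain n y As where H: "H = absn n (apps (Var y) As)"
      using \<open>is_hnf H\<close> unfolding is_hnf_iff by blast
    with track(4) obtain Bs where H': "H' = absn n (apps (Var y) Bs)" and args: "list_all2 beta_reds As Bs"
      using reds_hnf_inv by blast
    have len: "length Bs = length As" using args by (simp add: list_all2_lengthD)
    have "q \<notin> ann_mismatch subseq (BTa (Bs ! i)) (BTa (As ! i))"
      if "i < length Bs" "p = cpos n (length Bs) i @ q" for i q
      using "1.hyps" that args len length_cpos_append by (auto simp: list_all2_conv_all_nth)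
    then show ?thesis
      using track(3) len
      unfolding BTa_hnf_Node[OF \<open>hred M s H\<close> H] BTa_hnf_Node[OF track(1) H']
      by (subst ann_mismatch_Node) auto
  qed
qed

lemma card_le_root_children:
  fixes m :: nat
  assumes "finite F" "finite A" "F \<subseteq> A \<union> (\<Union>i<m. (\<lambda>q. c i @ q) ` G i)"
  shows "card F \<le> card A + (\<Sum>i<m. card {q \<in> G i. c i @ q \<in> F})"
proof -
  let ?G = "\<lambda>i. {q \<in> G i. c i @ q \<in> F}"
  have fin: "finite (?G i)" for i
    using finite_vimageI[OF assms(1), of "\<lambda>q. c i @ q"] by (auto intro: finite_subset simp: inj_on_def)
  have "F \<subseteq> A \<union> (\<Union>i<m. (\<lambda>q. c i @ q) ` ?G i)" using assms(3) by blast
  moreover have "finite (\<Union>i<m. (\<lambda>q. c i @ q) ` ?G i)"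
    by (intro finite_UN_I finite_imageI fin) simp
  ultimately have "card F \<le> card (A \<union> (\<Union>i<m. (\<lambda>q. c i @ q) ` ?G i))"
    using assms(2) by (intro card_mono) simp_all
  also have "\<dots> \<le> card A + card (\<Union>i<m. (\<lambda>q. c i @ q) ` ?G i)" by (rule card_Un_le)
  also have "card (\<Union>i<m. (\<lambda>q. c i @ q) ` ?G i) \<le> (\<Sum>i<m. card ((\<lambda>q. c i @ q) ` ?G i))"
    by (rule card_UN_le) simp
  also have "\<dots> \<le> (\<Sum>i<m. card (?G i))" by (intro sum_mono card_image_le fin)
  finally show ?thesis by simp
qed

lemma simple_hnf_cases:
  assumes "simple M" "has_hnf M"
  obtains s H where "hred M s H" "is_hnf H" "\<forall>(p, K) \<in> set s. simple_at K p"
    "\<forall>A \<in> set (hnf_args H). simple A"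
  using assms by (cases rule: simple.cases) (auto simp: simple_at_def)

lemma simple_relpowp_BTa_Node:
  assumes "simple M" "has_hnf M" "(beta ^^ k) M N"
  obtains a a' n y As Bs ks where
    "BTa M = Node a n y (map BTa As)" "BTa N = Node a' n y (map BTa Bs)"
    "subseq a' a" "length Bs = length As" "length ks = length As"
    "sum_list ks + (length a - length a') \<le> k"
    "\<forall>i < length As. simple (As ! i) \<and> (beta ^^ (ks ! i)) (As ! i) (Bs ! i)"
proof -
  obtain s H where H: "hred M s H" "is_hnf H" "\<forall>(p, K) \<in> set s. simple_at K p"
    "\<forall>A \<in> set (hnf_args H). simple A"
    using simple_hnf_cases[OF assms(1,2)] by blast
  from hred_relpowp_track[OF H(1,2) assms(3)] H(3) obtain s' H' k' where
    track: "hred N s' H'" "subseq (map fst s') (map fst s)" "(beta ^^ k') H H'"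
      "k' + (length s - length s') \<le> k"
    by blast
  obtain n y As where H_eq: "H = absn n (apps (Var y) As)" using H(2) unfolding is_hnf_iff by blast
  with track(3) obtain Bs where H'_eq: "H' = absn n (apps (Var y) Bs)" and args: "list_relpow beta As Bs k'"
    using relpowp_beta_hnf_inv by blast
  from list_relpow_nth[OF args] obtain ks where ks: "length ks = length As" "sum_list ks = k'"
    "\<forall>i < length As. (beta ^^ (ks ! i)) (As ! i) (Bs ! i)" by blast
  show thesis
  proof (rule that[of "map fst s" n y As "map fst s'" Bs ks])
    show "BTa M = Node (map fst s) n y (map BTa As)" by (rule BTa_hnf_Node[OF H(1) H_eq])
    show "BTa N = Node (map fst s') n y (map BTa Bs)" by (rule BTa_hnf_Node[OF track(1) H'_eq])
    show "\<forall>i < length As. simple (As ! i) \<and> (beta ^^ (ks ! i)) (As ! i) (Bs ! i)"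
      using H(4) H_eq ks(3) by simp
  qed (use track(2,4) list_relpow_length[OF args] ks(1,2) in auto)
qed

text \<open>Each mismatch costs a reduction step: a mismatch at the root means that the head reduction
  got shorter, and each lost head step was paid for by a step of the reduction.\<close>
lemma card_ann_mismatch_le:
  "simple M \<Longrightarrow> (beta ^^ k) M N \<Longrightarrow> finite F \<Longrightarrow> F \<subseteq> ann_mismatch (=) (BTa M) (BTa N) \<Longrightarrow>
    \<forall>p \<in> F. length p < d \<Longrightarrow> card F \<le> k"
proof (induct d arbitrary: M N k F)
  case (Suc d)
  show ?case
  proof (cases "has_hnf M")
    case False
    moreover from this have "\<not> has_hnf N"
      using has_hnf_conv[OF rtranclp_into_equivclp[OF relpowp_imp_rtranclp[OF Suc.prems(2)]]] by simp
    ultimately show ?thesis using Suc.prems(4) by (simp add: BTa_no_hnf)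
  next
    case True
    from Suc.prems(1) this Suc.prems(2) obtain a a' n y As Bs ks where
      BTa: "BTa M = Node a n y (map BTa As)" "BTa N = Node a' n y (map BTa Bs)"
      and sub: "subseq a' a" and len: "length Bs = length As" "length ks = length As"
      and cost: "sum_list ks + (length a - length a') \<le> k"
      and args: "\<forall>i < length As. simple (As ! i) \<and> (beta ^^ (ks ! i)) (As ! i) (Bs ! i)"
      by (rule simple_relpowp_BTa_Node)
    define m where "m = length As"
    define A where "A = {p :: pos. p = [] \<and> a \<noteq> a'}"
    define G where "G i = ann_mismatch (=) (BTa (As ! i)) (BTa (Bs ! i))" for i
    have "finite A" by (simp add: A_def)
    moreover have "F \<subseteq> A \<union> (\<Union>i<m. (\<lambda>q. cpos n m i @ q) ` G i)"
      using Suc.prems(4) len unfolding BTa A_def G_def m_def by (subst (asm) ann_mismatch_Node) auto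
    ultimately have "card F \<le> card A + (\<Sum>i<m. card {q \<in> G i. cpos n m i @ q \<in> F})"
      by (rule card_le_root_children[OF Suc.prems(3)])
    also have "card A \<le> length a - length a'"
    proof (cases "a = a'")
      case False
      with sub have "length a' < length a" using list_emb_length subseq_same_length by fastforce
      moreover from False have "A = {[]}" by (auto simp: A_def)
      ultimately show ?thesis by simp
    qed (simp add: A_def)
    also have "(\<Sum>i<m. card {q \<in> G i. cpos n m i @ q \<in> F}) \<le> (\<Sum>i<m. ks ! i)"
    proof (intro sum_mono)
      fix i assume "i \<in> {..<m}"
      show "card {q \<in> G i. cpos n m i @ q \<in> F} \<le> ks ! i"
      proof (rule Suc.hyps)
        show "finite {q \<in> G i. cpos n m i @ q \<in> F}"
          using finite_vimageI[OF Suc.prems(3), of "\<lambda>q. cpos n m i @ q"]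
          by (auto intro: finite_subset simp: inj_on_def)
        show "\<forall>q \<in> {q \<in> G i. cpos n m i @ q \<in> F}. length q < d"
          using Suc.prems(5) by (auto simp: cpos_def)
      qed (use args \<open>i \<in> {..<m}\<close> in \<open>auto simp: G_def m_def\<close>)
    qed
    also have "(\<Sum>i<m. ks ! i) = sum_list ks" using len by (simp add: m_def sum_list_sum_nth atLeast0LessThan)
    finally show ?thesis using cost by simp
  qed
qed simp

lemma finite_ann_mismatch_simple:
  assumes "simple M" "beta_reds M N"
  shows "finite (ann_mismatch (=) (BTa M) (BTa N))"
proof (rule ccontr)
  assume infinite: "\<not> finite (ann_mismatch (=) (BTa M) (BTa N))"
  from assms(2) obtain k where k: "(beta ^^ k) M N" by (blast dest: rtranclp_imp_relpowp)
  from infinite_arbitrarily_large[OF infinite] obtain F where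
    F: "finite F" "card F = Suc k" "F \<subseteq> ann_mismatch (=) (BTa M) (BTa N)" by blast
  have "\<forall>p \<in> F. length p < Suc (Max (length ` F))" using F(1) by (simp add: le_imp_less_Suc)
  from card_ann_mismatch_le[OF assms(1) k F(1,3) this] F(2) show False by simp
qed

lemma ex_length_bound_not_in:
  fixes A :: "'a list set"
  assumes "finite A"
  shows "\<exists>l. \<forall>p. l \<le> length p \<longrightarrow> p \<notin> A"
proof (intro exI allI impI)
  fix p :: "'a list" assume "Suc (Max (length ` A)) \<le> length p"
  moreover have "p \<in> A \<Longrightarrow> length p \<le> Max (length ` A)" using assms by simp
  ultimately show "p \<notin> A" by linarith
qed

lemma bt_le_ev_if_finite_mismatch:
  "erase T1 = erase T2 \<Longrightarrow> finite (ann_mismatch subseq T1 T2) \<Longrightarrow> bt_le_ev T1 T2"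
  unfolding bt_le_ev_def ann_mismatch_def by (blast dest: ex_length_bound_not_in)

lemma bt_eq_ev_if_finite_mismatch:
  "erase T1 = erase T2 \<Longrightarrow> finite (ann_mismatch (=) T1 T2) \<Longrightarrow> bt_eq_ev T1 T2"
  unfolding bt_eq_ev_def ann_mismatch_def by (blast dest: ex_length_bound_not_in)

lemma bt_le_BTa_reds: "beta_reds M N \<Longrightarrow> bt_le (BTa N) (BTa M)"
  unfolding bt_le_def
  using erase_BTa_conv[OF equivclp_sym[OF rtranclp_into_equivclp]] ann_mismatch_subseq_reds
  by (auto simp: ann_mismatch_def)

lemma bt_eq_ev_BTa_reds_simple: "simple M \<Longrightarrow> beta_reds M N \<Longrightarrow> bt_eq_ev (BTa M) (BTa N)"
  by (simp add: bt_eq_ev_if_finite_mismatch erase_BTa_conv rtranclp_into_equivclp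
      finite_ann_mismatch_simple)

lemma bt_le_ev_BTa_conv_simple:
  assumes "simple M" "beta_conv M N"
  shows "bt_le_ev (BTa M) (BTa N)"
proof (rule bt_le_ev_if_finite_mismatch)
  show "erase (BTa M) = erase (BTa N)" using assms(2) by (rule erase_BTa_conv)
  from church_rosser[OF assms(2)] obtain L where "beta_reds M L" "beta_reds N L" by blast
  have "ann_mismatch subseq (BTa M) (BTa N) \<subseteq>
      ann_mismatch (=) (BTa M) (BTa L) \<union> ann_mismatch subseq (BTa L) (BTa N)"
    by (rule ann_mismatch_trans) simp
  moreover have "ann_mismatch subseq (BTa L) (BTa N) = {}"
    using ann_mismatch_subseq_reds[OF \<open>beta_reds N L\<close>] by blast
  ultimately show "finite (ann_mismatch subseq (BTa M) (BTa N))"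
    using finite_ann_mismatch_simple[OF assms(1) \<open>beta_reds M L\<close>] by (auto intro: finite_subset)
qed

lemma bt_eq_ev_BTa_conv_simple:
  assumes "simple M" "simple N" "beta_conv M N"
  shows "bt_eq_ev (BTa M) (BTa N)"
proof (rule bt_eq_ev_if_finite_mismatch)
  show "erase (BTa M) = erase (BTa N)" using assms(3) by (rule erase_BTa_conv)
  from church_rosser[OF assms(3)] obtain L where "beta_reds M L" "beta_reds N L" by blast
  have "ann_mismatch (=) (BTa M) (BTa N) \<subseteq>
      ann_mismatch (=) (BTa M) (BTa L) \<union> ann_mismatch (=) (BTa L) (BTa N)"
    by (rule ann_mismatch_trans) simp
  then show "finite (ann_mismatch (=) (BTa M) (BTa N))"
    using finite_ann_mismatch_simple[OF assms(1) \<open>beta_reds M L\<close>]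
      finite_ann_mismatch_simple[OF assms(2) \<open>beta_reds N L\<close>]
    by (auto intro: finite_subset simp: ann_mismatch_eq_sym[of "BTa L"])
qed

theorem theorem7p2:
  shows "(\<forall>M N. beta_reds M N \<longrightarrow> bt_le (BTa N) (BTa M))
       \<and> (\<forall>M N. (\<nexists>M'. beta_reds M M' \<and> bt_le (BTa M') (BTa N)) \<longrightarrow> \<not> beta_conv M N)
       \<and> (\<forall>M N. simple M \<and> beta_reds M N \<longrightarrow> bt_eq_ev (BTa M) (BTa N))
       \<and> (\<forall>M N. simple M \<and> \<not> bt_le_ev (BTa M) (BTa N) \<longrightarrow> \<not> beta_conv M N)
       \<and> (\<forall>M N. simple M \<and> simple N \<and> \<not> bt_eq_ev (BTa M) (BTa N) \<longrightarrow> \<not> beta_conv M N)"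
proof (intro conjI allI impI notI)
  fix M N assume "beta_reds M N"
  then show "bt_le (BTa N) (BTa M)" by (rule bt_le_BTa_reds)
next
  fix M N assume no_reduct: "\<nexists>M'. beta_reds M M' \<and> bt_le (BTa M') (BTa N)" and "beta_conv M N"
  from church_rosser[OF this(2)] obtain L where "beta_reds M L" "beta_reds N L" by blast
  with no_reduct show False using bt_le_BTa_reds by blast
qed (auto dest: bt_eq_ev_BTa_reds_simple bt_le_ev_BTa_conv_simple bt_eq_ev_BTa_conv_simple)

end
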